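(* $\lim_{\varepsilon\to0}\beta_\varepsilon(\Phi_\varepsilon(y))=y$ uniformly in $y\in M$.
   Context: Let $s\in(0,1)$, $N>2s$, $0<\mu<2s$, $2_s^*=\frac{2N}{N-2s}$. $V:\mathbb{R}^N\to\mathbb{R}$ continuous, $\inf V=V_0>0$, and there is a bounded open $\Lambda\subset\mathbb{R}^N$ with $V_0<\min_{\partial\Lambda}V$; $M=\{x\in\Lambda:V(x)=V_0\}$, $M_\delta=\{x:\mathrm{dist}(x,M)\le\delta\}$. $f:\mathbb{R}\to\mathbb{R}$ continuous, $f(t)=0$ for $t<0$, $\lim_{t\to0}f(t)/t=0$, $\lim_{t\to\infty}f(t)/t^{q-1}=0$ for some $q\in(2,\frac{2_s^*}{2}(2-\frac{\mu}{N}))$, $0<4F(t)\le2f(t)t$ for $t>0$ ($F(t)=\int_0^tf$), $t\mapsto f(t)/t$ increasing on $(0,\infty)$. Penalization: for $\ell>2$ and $a>0$ with $f(a)/a=V_0/\ell$, $\tilde f(t)=f(t)$ ($t\le a$), $\tilde f(t)=\frac{V_0}{\ell}t$ ($t>a$), $g(x,t)=\chi_\Lambda(x)f(t)+(1-\chi_\Lambda(x))\tilde f(t)$, $G(x,t)=\int_0^tg(x,\tau)d\tau$; $H^s_\varepsilon$ is the completion of $C_c^\infty(\mathbb{R}^N)$ under $\|u\|_\varepsilon^2=\iint\frac{|u(x)-u(y)|^2}{|x-y|^{N+2s}}dxdy+\int V(\varepsilon x)u^2dx$; $\tilde K_\varepsilon(u)(x)=\int\frac{G(\varepsilon y,u(y))}{|x-y|^\mu}dy$;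 $J_\varepsilon(u)=\frac12\|u\|_\varepsilon^2-\frac12\int\tilde K_\varepsilon(u)G(\varepsilon x,u)dx$; $c_\varepsilon=\inf_{u\ne0}\max_{t\ge0}J_\varepsilon(tu)$; $\kappa>0$ is a constant independent of $\varepsilon,\ell,a$ with $c_\varepsilon<\kappa$ for all $\varepsilon$; $\mathcal{B}=\{u:\|u\|_\varepsilon^2\le4(\kappa+1)\}$; the parameters are $\ell=\ell_0$ and $a$ with $f(a)/a=V_0/\ell_0$, where $\ell_0>2$ is such that $\sup_{u\in\mathcal{B}}\|\tilde K_\varepsilon(u)\|_{L^\infty}<\ell_0/2$ for all $\varepsilon>0$. $\mathcal{N}_\varepsilon=\{u\ne0:\langle J_\varepsilon'(u),u\rangle=0\}$. $w$ is a positive ground state of $J_{V_0}(u)=\frac12\big(\iint\frac{|u(x)-u(y)|^2}{|x-y|^{N+2s}}+V_0\int u^2\big)-\frac12\int(\frac{1}{|x|^\mu}*F(u))F(u)$ on $H^s(\mathbb{R}^N)$. Fix $\delta>0$ with $M_\delta\subset\Lambda$, and $\eta\in C_c^\infty([0,\infty),[0,1])$ with $\eta=1$ on $[0,\delta/2]$, $\eta=0$ on $[\delta,\infty)$. For $y\in M$: $\Psi_{\varepsilon,y}(x)=\eta(|\varepsilon x-y|)w(\frac{\varepsilon x-y}{\varepsilon})$, $t_\varepsilon>0$ the unique maximizer of $t\mapsto J_\varepsilon(t\Psi_{\varepsilon,y})$, $\Phi_\varepsilon(y)=t_\varepsilon\Psi_{\varepsilon,y}$. Fix $\rho>0$ with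 $M_\delta\subset B_\rho(0)$, let $\Upsilon(x)=x$ for $|x|\le\rho$ and $\Upsilon(x)=\rho x/|x|$ for $|x|\ge\rho$, and define $\beta_\varepsilon:\mathcal{N}_\varepsilon\to\mathbb{R}^N$ by $\beta_\varepsilon(u)=\frac{\int\Upsilon(\varepsilon x)u^2(x)dx}{\int u^2(x)dx}$. *)

theory Defs
  imports "HOL-Analysis.Analysis"
begin

definition prim :: "(real \<Rightarrow> real) \<Rightarrow> real \<Rightarrow> real" where
  "prim h t = (if 0 \<le> t then integral {0..t} h else - integral {t..0} h)"

definition gagliardo :: "real \<Rightarrow> ('a::euclidean_space \<Rightarrow> real) \<Rightarrow> ennreal" where
  "gagliardo s u = (\<integral>\<^sup>+ x. (\<integral>\<^sup>+ y. ennreal ((u x - u y)^2 / norm (x - y) powr (real DIM('a) + 2 * s)) \<partial>lborel) \<partial>lborel)"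

definition eps_norm_sq :: "('a::euclidean_space \<Rightarrow> real) \<Rightarrow> real \<Rightarrow> real \<Rightarrow> ('a \<Rightarrow> real) \<Rightarrow> ennreal" where
  "eps_norm_sq V s \<epsilon> u = gagliardo s u + (\<integral>\<^sup>+ x. ennreal (V (\<epsilon> *\<^sub>R x) * (u x)^2) \<partial>lborel)"

text \<open>H^s_eps: functions with finite eps-norm (equals the completion of C_c^infty).\<close>
definition H_eps :: "('a::euclidean_space \<Rightarrow> real) \<Rightarrow> real \<Rightarrow> real \<Rightarrow> ('a \<Rightarrow> real) set" where
  "H_eps V s \<epsilon> = {u. u \<in> borel_measurable lborel \<and> eps_norm_sq V s \<epsilon> u < \<infinity>}"

definition Hs :: "real \<Rightarrow> ('a::euclidean_space \<Rightarrow> real) set" where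
  "Hs s = {u. u \<in> borel_measurable lborel \<and> gagliardo s u < \<infinity> \<and>
              (\<integral>\<^sup>+ x. ennreal ((u x)^2) \<partial>lborel) < \<infinity>}"

definition riesz_pot :: "real \<Rightarrow> ('a::euclidean_space \<Rightarrow> real) \<Rightarrow> 'a \<Rightarrow> real" where
  "riesz_pot \<mu> h x = (LINT y|lborel. h y / norm (x - y) powr \<mu>)"

definition f_tilde :: "(real \<Rightarrow> real) \<Rightarrow> real \<Rightarrow> real \<Rightarrow> real \<Rightarrow> real \<Rightarrow> real" where
  "f_tilde f a l V0 t = (if t \<le> a then f t else V0 / l * t)"

definition pen_g :: "'a set \<Rightarrow> (real \<Rightarrow> real) \<Rightarrow> real \<Rightarrow> real \<Rightarrow> real \<Rightarrow> 'a \<Rightarrow> real \<Rightarrow> real" where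
  "pen_g \<Lambda> f a l V0 x t = indicator \<Lambda> x * f t + (1 - indicator \<Lambda> x) * f_tilde f a l V0 t"

definition pen_G :: "'a set \<Rightarrow> (real \<Rightarrow> real) \<Rightarrow> real \<Rightarrow> real \<Rightarrow> real \<Rightarrow> 'a \<Rightarrow> real \<Rightarrow> real" where
  "pen_G \<Lambda> f a l V0 x t = prim (pen_g \<Lambda> f a l V0 x) t"

definition K_eps :: "real \<Rightarrow> ('a::euclidean_space \<Rightarrow> real \<Rightarrow> real) \<Rightarrow> real \<Rightarrow> ('a \<Rightarrow> real) \<Rightarrow> 'a \<Rightarrow> real" where
  "K_eps \<mu> Gp \<epsilon> u = riesz_pot \<mu> (\<lambda>y. Gp (\<epsilon> *\<^sub>R y) (u y))"

definition J_eps :: "('a::euclidean_space \<Rightarrow> real) \<Rightarrow> real \<Rightarrow> real \<Rightarrow> ('a \<Rightarrow> real \<Rightarrow> real) \<Rightarrow> real \<Rightarrow> ('a \<Rightarrow> real) \<Rightarrow> real" where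
  "J_eps V s \<mu> Gp \<epsilon> u = 1/2 * enn2real (eps_norm_sq V s \<epsilon> u)
      - 1/2 * (LINT x|lborel. K_eps \<mu> Gp \<epsilon> u x * Gp (\<epsilon> *\<^sub>R x) (u x))"

text \<open>Mountain-pass type level c_eps (extended reals, to avoid junk values).\<close>
definition c_eps :: "('a::euclidean_space \<Rightarrow> real) \<Rightarrow> real \<Rightarrow> real \<Rightarrow> ('a \<Rightarrow> real \<Rightarrow> real) \<Rightarrow> real \<Rightarrow> ereal" where
  "c_eps V s \<mu> Gp \<epsilon> =
     (INF u\<in>{u \<in> H_eps V s \<epsilon>. \<not> (AE x in lborel. u x = 0)}.
        (SUP \<tau>\<in>{0..}. ereal (J_eps V s \<mu> Gp \<epsilon> (\<lambda>x. \<tau> * u x))))"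

definition ball_B :: "('a::euclidean_space \<Rightarrow> real) \<Rightarrow> real \<Rightarrow> real \<Rightarrow> real \<Rightarrow> ('a \<Rightarrow> real) set" where
  "ball_B V s \<epsilon> \<kappa> = {u \<in> H_eps V s \<epsilon>. eps_norm_sq V s \<epsilon> u \<le> ennreal (4 * (\<kappa> + 1))}"

definition J_V0 :: "real \<Rightarrow> real \<Rightarrow> real \<Rightarrow> (real \<Rightarrow> real) \<Rightarrow> ('a::euclidean_space \<Rightarrow> real) \<Rightarrow> real" where
  "J_V0 V0 s \<mu> f u = 1/2 * (enn2real (gagliardo s u) + V0 * (LINT x|lborel. (u x)^2))
      - 1/2 * (LINT x|lborel. riesz_pot \<mu> (\<lambda>y. prim f (u y)) x * prim f (u x))"

definition critical_point :: "(('a \<Rightarrow> real) \<Rightarrow> real) \<Rightarrow> ('a \<Rightarrow> real) set \<Rightarrow> ('a \<Rightarrow> real) \<Rightarrow> bool" where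
  "critical_point J H u \<longleftrightarrow> u \<in> H \<and>
     (\<forall>\<phi>\<in>H. ((\<lambda>\<tau>. J (\<lambda>x. u x + \<tau> * \<phi> x)) has_real_derivative 0) (at 0))"

definition ground_state :: "(('a::euclidean_space \<Rightarrow> real) \<Rightarrow> real) \<Rightarrow> ('a \<Rightarrow> real) set \<Rightarrow> ('a \<Rightarrow> real) \<Rightarrow> bool" where
  "ground_state J H u \<longleftrightarrow> critical_point J H u \<and> \<not> (AE x in lborel. u x = 0) \<and>
     (\<forall>v. critical_point J H v \<and> \<not> (AE x in lborel. v x = 0) \<longrightarrow> J u \<le> J v)"

definition Upsilon :: "real \<Rightarrow> 'a::euclidean_space \<Rightarrow> 'a" where
  "Upsilon \<rho> x = (if norm x \<le> \<rho> then x else (\<rho> / norm x) *\<^sub>R x)"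

definition beta_eps :: "real \<Rightarrow> real \<Rightarrow> ('a::euclidean_space \<Rightarrow> real) \<Rightarrow> 'a" where
  "beta_eps \<rho> \<epsilon> u = (1 / (LINT x|lborel. (u x)^2)) *\<^sub>R (LINT x|lborel. (u x)^2 *\<^sub>R Upsilon \<rho> (\<epsilon> *\<^sub>R x))"

definition Psi_eps :: "(real \<Rightarrow> real) \<Rightarrow> ('a::euclidean_space \<Rightarrow> real) \<Rightarrow> real \<Rightarrow> 'a \<Rightarrow> 'a \<Rightarrow> real" where
  "Psi_eps \<eta> w \<epsilon> y x = \<eta> (norm (\<epsilon> *\<^sub>R x - y)) * w ((1 / \<epsilon>) *\<^sub>R (\<epsilon> *\<^sub>R x - y))"

end

theory Submission
  imports Defs
begin

(* The factor t_eps cancels in beta_eps, and the substitution x = z + y/eps turns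
   beta_eps(Phi_eps(y)) into the mean of Upsilon(eps z + y) with weight (eta(|eps z|) w(z))^2.
   Wherever the cutoff is nonzero, eps z + y lies in M_delta, where Upsilon is the identity, so
   the deviation from y is eps |z|.  Hence the distance to y is at most the integral of
   w^2 min(delta, eps |z|), which tends to 0 by dominated convergence independently of y,
   divided by the mass of w^2 on the ball of radius delta/2, a lower bound for the total weight
   when eps <= 1. *)

lemma lborel_integral_translate:
  fixes h :: "'a::euclidean_space \<Rightarrow> 'b::{banach,second_countable_topology}"
  assumes "h \<in> borel_measurable borel"
  shows "(LINT x|lborel. h (x - c)) = (LINT x|lborel. h x)"
proof -
  have "(LINT x|lborel. h x) = integral\<^sup>L (distr lborel borel ((+) (-c))) h"
    by (simp add: lborel_distr_plus)
  also have "\<dots> = (LINT x|lborel. h (-c + x))"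
    using assms by (subst integral_distr) auto
  finally show ?thesis by simp
qed

lemma Upsilon_measurable [measurable]: "Upsilon \<rho> \<in> borel_measurable borel"
  unfolding Upsilon_def[abs_def] by measurable

lemma Upsilon_eq_self: "norm x \<le> \<rho> \<Longrightarrow> Upsilon \<rho> x = x"
  by (simp add: Upsilon_def)

lemma beta_eps_scale:
  assumes "c \<noteq> 0"
  shows "beta_eps \<rho> \<epsilon> (\<lambda>x. c * u x) = beta_eps \<rho> \<epsilon> u"
proof -
  have "(LINT x|lborel. (c * u x)^2 *\<^sub>R Upsilon \<rho> (\<epsilon> *\<^sub>R x))
      = c^2 *\<^sub>R (LINT x|lborel. (u x)^2 *\<^sub>R Upsilon \<rho> (\<epsilon> *\<^sub>R x))"
    by (simp add: power_mult_distrib flip: scaleR_scaleR)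
  moreover have "(LINT x|lborel. (c * u x)^2) = c^2 * (LINT x|lborel. (u x)^2)"
    by (simp add: power_mult_distrib)
  ultimately show ?thesis
    using assms by (simp add: beta_eps_def)
qed

lemma beta_eps_translate:
  assumes "u \<in> borel_measurable borel"
  shows "beta_eps \<rho> \<epsilon> (\<lambda>x. u (x - c)) =
    (1 / (LINT z|lborel. (u z)^2)) *\<^sub>R (LINT z|lborel. (u z)^2 *\<^sub>R Upsilon \<rho> (\<epsilon> *\<^sub>R z + \<epsilon> *\<^sub>R c))"
proof -
  have "(LINT x|lborel. (u (x - c))^2 *\<^sub>R Upsilon \<rho> (\<epsilon> *\<^sub>R x))
      = (LINT z|lborel. (u z)^2 *\<^sub>R Upsilon \<rho> (\<epsilon> *\<^sub>R z + \<epsilon> *\<^sub>R c))"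
    using lborel_integral_translate[where h="\<lambda>z. (u z)^2 *\<^sub>R Upsilon \<rho> (\<epsilon> *\<^sub>R z + \<epsilon> *\<^sub>R c)" and c=c]
    using assms by (simp add: scaleR_diff_right)
  moreover have "(LINT x|lborel. (u (x - c))^2) = (LINT z|lborel. (u z)^2)"
    using lborel_integral_translate[where h="\<lambda>z. (u z)^2"] assms by simp
  ultimately show ?thesis by (simp add: beta_eps_def)
qed

lemma Psi_eps_shift:
  "\<epsilon> \<noteq> 0 \<Longrightarrow> Psi_eps \<eta> w \<epsilon> y x = Psi_eps \<eta> w \<epsilon> 0 (x - (1 / \<epsilon>) *\<^sub>R y)"
  by (simp add: Psi_eps_def scaleR_diff_right)

lemma Psi_eps_0: "\<epsilon> \<noteq> 0 \<Longrightarrow> Psi_eps \<eta> w \<epsilon> 0 z = \<eta> (norm (\<epsilon> *\<^sub>R z)) * w z"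
  by (simp add: Psi_eps_def)

lemma weighted_mean_dist_le:
  fixes Y :: "'a \<Rightarrow> 'b::{banach,second_countable_topology}"
  assumes p: "integrable M p" "\<And>x. 0 \<le> p x" "0 < integral\<^sup>L M p"
    and Y: "Y \<in> borel_measurable M"
    and g: "integrable M g" "\<And>x. p x * norm (Y x - y) \<le> g x"
  shows "norm ((1 / integral\<^sup>L M p) *\<^sub>R (\<integral>x. p x *\<^sub>R Y x \<partial>M) - y)
    \<le> integral\<^sup>L M g / integral\<^sup>L M p"
proof -
  have int_dev: "integrable M (\<lambda>x. p x *\<^sub>R (Y x - y))"
  proof (rule Bochner_Integration.integrable_bound[OF g(1)])
    show "(\<lambda>x. p x *\<^sub>R (Y x - y)) \<in> borel_measurable M"
      using p(1) Y by measurable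
    show "AE x in M. norm (p x *\<^sub>R (Y x - y)) \<le> norm (g x)"
      using p(2) g(2) by (auto intro!: AE_I2 order_trans[OF _ abs_ge_self])
  qed
  have "(\<integral>x. p x *\<^sub>R Y x \<partial>M) = (\<integral>x. p x *\<^sub>R (Y x - y) + p x *\<^sub>R y \<partial>M)"
    by (simp add: scaleR_diff_right)
  also have "\<dots> = (\<integral>x. p x *\<^sub>R (Y x - y) \<partial>M) + integral\<^sup>L M p *\<^sub>R y"
    using int_dev p(1) by simp
  finally have "(1 / integral\<^sup>L M p) *\<^sub>R (\<integral>x. p x *\<^sub>R Y x \<partial>M) - y
      = (1 / integral\<^sup>L M p) *\<^sub>R (\<integral>x. p x *\<^sub>R (Y x - y) \<partial>M)"
    using p(3) by (simp add: scaleR_add_right)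
  moreover have "norm (\<integral>x. p x *\<^sub>R (Y x - y) \<partial>M) \<le> integral\<^sup>L M g"
  proof -
    have "norm (\<integral>x. p x *\<^sub>R (Y x - y) \<partial>M) \<le> (\<integral>x. norm (p x *\<^sub>R (Y x - y)) \<partial>M)"
      by (rule integral_norm_bound)
    also have "\<dots> \<le> integral\<^sup>L M g"
      using integrable_norm[OF int_dev] g p(2) by (intro integral_mono) (auto simp: abs_mult)
    finally show ?thesis .
  qed
  ultimately show ?thesis
    using p(3) by (simp add: divide_right_mono)
qed

lemma lborel_integral_indicator_cball_pos:
  fixes W :: "'a::euclidean_space \<Rightarrow> real"
  assumes "integrable lborel W" "\<And>x. 0 < W x" "0 < r"
  shows "0 < (LINT x|lborel. W x * indicator (cball c r) x)"
proof -
  have int: "integrable lborel (\<lambda>x. W x * indicator (cball c r) x)"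
    using assms(1) by (rule integrable_real_mult_indicator[rotated]) simp
  have nonneg: "0 \<le> W x * indicator (cball c r) x" for x
    using assms(2)[of x] by (simp add: indicator_def)
  have "emeasure lborel (cball c r) \<noteq> 0"
    using assms(3) by (simp add: emeasure_cball unit_ball_vol_pos[THEN less_imp_neq, symmetric])
  then have "\<not> (AE x in lborel. x \<notin> cball c r)"
    by (subst AE_iff_measurable[where N="cball c r"]) auto
  moreover have "x \<notin> cball c r" if "W x * indicator (cball c r) x = 0" for x
    using that assms(2)[of x] by (auto split: split_indicator_asm)
  ultimately have "\<not> (AE x in lborel. W x * indicator (cball c r) x = 0)"
    by (metis (mono_tags, lifting) eventually_mono)
  then have "(LINT x|lborel. W x * indicator (cball c r) x) \<noteq> 0"
    using integral_nonneg_eq_0_iff_AE[OF int] nonneg by auto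
  moreover have "0 \<le> (LINT x|lborel. W x * indicator (cball c r) x)"
    using nonneg by (rule Bochner_Integration.integral_nonneg)
  ultimately show ?thesis by simp
qed

lemma lborel_integral_min_scaled_norm_tendsto_0:
  fixes W :: "'a::euclidean_space \<Rightarrow> real"
  assumes W: "integrable lborel W" and "0 \<le> \<delta>"
  shows "((\<lambda>\<epsilon>. LINT z|lborel. W z * min \<delta> (\<epsilon> * norm z)) \<longlongrightarrow> 0) (at_right 0)"
proof -
  have Wm: "W \<in> borel_measurable borel"
    using W by auto
  have lim: "AE z in lborel. ((\<lambda>T. W z * min \<delta> (norm z / T)) \<longlongrightarrow> 0) at_top"
  proof (rule AE_I2)
    fix z :: 'a
    have "((\<lambda>T. norm z / T) \<longlongrightarrow> 0) at_top"
      by (intro tendsto_divide_0[OF tendsto_const] filterlim_at_top_imp_at_infinity filterlim_ident)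
    then have "((\<lambda>T. W z * min \<delta> (norm z / T)) \<longlongrightarrow> W z * min \<delta> 0) at_top"
      by (intro tendsto_intros)
    then show "((\<lambda>T. W z * min \<delta> (norm z / T)) \<longlongrightarrow> 0) at_top"
      using assms(2) by simp
  qed
  have bound: "\<forall>\<^sub>F T in at_top. AE z in lborel. norm (W z * min \<delta> (norm z / T)) \<le> \<delta> * norm (W z)"
    using eventually_gt_at_top[of 0]
    by eventually_elim (use assms(2) in \<open>auto intro!: AE_I2 simp: abs_mult mult.commute[of \<delta>] mult_left_mono\<close>)
  have "((\<lambda>T. LINT z|lborel. W z * min \<delta> (norm z / T)) \<longlongrightarrow> 0) at_top"
    using integral_dominated_convergence_at_top[OF _ _ _ lim bound] Wm W by simp
  then have "((\<lambda>\<epsilon>. LINT z|lborel. W z * min \<delta> (norm z / inverse \<epsilon>)) \<longlongrightarrow> 0) (at_right 0)"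
    by (rule filterlim_compose[OF _ filterlim_inverse_at_top_right])
  then show ?thesis
    by (simp add: divide_inverse mult.commute)
qed

lemma uniform_limit_if_dist_bound:
  assumes "(b \<longlongrightarrow> 0) F" "\<forall>\<^sub>F x in F. \<forall>y\<in>S. dist (f x y) (g y) \<le> b x"
  shows "uniform_limit S f g F"
proof (rule uniform_limitI)
  fix r :: real assume "0 < r"
  with assms(1) have "\<forall>\<^sub>F x in F. b x < r"
    by (auto simp: order_tendsto_iff)
  with assms(2) show "\<forall>\<^sub>F x in F. \<forall>y\<in>S. dist (f x y) (g y) < r"
    by eventually_elim auto
qed

lemma Hs_integrable_square: "u \<in> Hs s \<Longrightarrow> integrable lborel (\<lambda>x. (u x)^2)"
  by (auto simp: Hs_def intro!: integrableI_bounded)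

lemma continuous_on_atLeast_0_if_differentiable_and_const_near_0:
  fixes \<eta> :: "real \<Rightarrow> real"
  assumes "\<And>x. 0 < x \<Longrightarrow> \<eta> differentiable (at x)"
    and "0 < d" "\<And>r. 0 \<le> r \<Longrightarrow> r \<le> d \<Longrightarrow> \<eta> r = c"
  shows "continuous_on {0..} \<eta>"
proof (rule continuous_on_eq_continuous_within[THEN iffD2], intro ballI)
  fix x :: real assume "x \<in> {0..}"
  show "continuous (at x within {0..}) \<eta>"
  proof (cases "0 < x")
    case True
    then show ?thesis
      using assms(1) differentiable_imp_continuous_within differentiable_at_withinI by blast
  next
    case False
    with \<open>x \<in> {0..}\<close> have "x = 0" by simp
    have "continuous (at x within {0..}) (\<lambda>_. c)" by simp
    then show ?thesis
      by (rule continuous_transform_within[where \<delta>=d]) (use assms \<open>x = 0\<close> in \<open>auto simp: dist_real_def\<close>)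
  qed
qed

lemma dist_beta_eps_Psi_eps_le:
  fixes w :: "'a::euclidean_space \<Rightarrow> real" and M :: "'a set"
  assumes w: "w \<in> borel_measurable borel" "integrable lborel (\<lambda>z. (w z)^2)"
    and mass_pos: "0 < (LINT z|lborel. (w z)^2 * indicator (cball 0 (\<delta>/2)) z)"
    and eta: "continuous_on {0..} \<eta>" "\<And>r. 0 \<le> r \<Longrightarrow> 0 \<le> \<eta> r \<and> \<eta> r \<le> 1"
      "\<And>r. 0 \<le> r \<Longrightarrow> r \<le> \<delta> / 2 \<Longrightarrow> \<eta> r = 1" "\<And>r. \<delta> \<le> r \<Longrightarrow> \<eta> r = 0"
    and delta: "0 < \<delta>" "{x. infdist x M \<le> \<delta>} \<subseteq> ball 0 \<rho>"
    and eps: "0 < \<epsilon>" "\<epsilon> \<le> 1" and "y \<in> M" "T \<noteq> 0"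
  shows "norm (beta_eps \<rho> \<epsilon> (\<lambda>x. T * Psi_eps \<eta> w \<epsilon> y x) - y)
    \<le> (LINT z|lborel. (w z)^2 * min \<delta> (\<epsilon> * norm z))
        / (LINT z|lborel. (w z)^2 * indicator (cball 0 (\<delta>/2)) z)"
proof -
  define \<Phi> where "\<Phi> z = \<eta> (norm (\<epsilon> *\<^sub>R z)) * w z" for z :: 'a
  define Y where "Y z = Upsilon \<rho> (\<epsilon> *\<^sub>R z + y)" for z :: 'a
  have \<Phi>_measurable [measurable]: "\<Phi> \<in> borel_measurable borel"
  proof -
    have "continuous_on UNIV (\<lambda>z::'a. \<eta> (norm (\<epsilon> *\<^sub>R z)))"
      by (rule continuous_on_compose2[OF eta(1)]) (auto intro!: continuous_intros)
    then show ?thesis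
      unfolding \<Phi>_def[abs_def] by (rule borel_measurable_times[OF borel_measurable_continuous_onI w(1)])
  qed
  have \<Phi>_sq_le: "(\<Phi> z)^2 \<le> (w z)^2" for z
    using eta(2)[of "norm (\<epsilon> *\<^sub>R z)"]
    by (simp add: \<Phi>_def power_mult_distrib mult_left_le_one_le power_le_one)
  have int_\<Phi>: "integrable lborel (\<lambda>z. (\<Phi> z)^2)"
    by (rule Bochner_Integration.integrable_bound[OF w(2)]) (use \<Phi>_sq_le in \<open>auto intro!: AE_I2\<close>)
  have int_g: "integrable lborel (\<lambda>z. (w z)^2 * min \<delta> (\<epsilon> * norm z))"
    by (rule Bochner_Integration.integrable_bound[OF integrable_mult_left[OF w(2), of \<delta>]])
      (use w(1) delta eps in \<open>auto intro!: AE_I2 mult_left_mono simp: abs_mult\<close>)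
  have mass: "(LINT z|lborel. (w z)^2 * indicator (cball 0 (\<delta>/2)) z) \<le> (LINT z|lborel. (\<Phi> z)^2)"
  proof (rule integral_mono[OF integrable_real_mult_indicator[OF _ w(2)] int_\<Phi>])
    fix z :: 'a
    have "\<eta> (norm (\<epsilon> *\<^sub>R z)) = 1" if "z \<in> cball 0 (\<delta>/2)"
      using that eps mult_left_le_one_le[of "norm z" \<epsilon>] by (intro eta(3)) auto
    then show "(w z)^2 * indicator (cball 0 (\<delta>/2)) z \<le> (\<Phi> z)^2"
      by (simp add: \<Phi>_def split: split_indicator)
  qed simp
  have deviation: "(\<Phi> z)^2 * norm (Y z - y) \<le> (w z)^2 * min \<delta> (\<epsilon> * norm z)" for z
  proof (cases "\<eta> (norm (\<epsilon> *\<^sub>R z)) = 0")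
    case True
    then show ?thesis
      using delta eps by (simp add: \<Phi>_def)
  next
    case False
    then have near: "\<epsilon> * norm z < \<delta>"
      using eta(4) eps by (metis abs_of_pos norm_scaleR not_less)
    have "infdist (\<epsilon> *\<^sub>R z + y) M \<le> \<delta>"
      using infdist_le[OF \<open>y \<in> M\<close>, of "\<epsilon> *\<^sub>R z + y"] near eps by (simp add: dist_norm)
    then have "Y z = \<epsilon> *\<^sub>R z + y"
      using delta(2) unfolding Y_def by (intro Upsilon_eq_self less_imp_le) auto
    then have "norm (Y z - y) = min \<delta> (\<epsilon> * norm z)"
      using near eps by simp
    then show ?thesis
      using \<Phi>_sq_le[of z] near eps by (simp add: mult_right_mono)
  qed
  have "beta_eps \<rho> \<epsilon> (\<lambda>x. T * Psi_eps \<eta> w \<epsilon> y x) = beta_eps \<rho> \<epsilon> (\<lambda>x. \<Phi> (x - (1 / \<epsilon>) *\<^sub>R y))"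
    using eps \<open>T \<noteq> 0\<close> by (simp add: beta_eps_scale Psi_eps_shift[of \<epsilon>] Psi_eps_0 \<Phi>_def)
  also have "\<dots> = (1 / (LINT z|lborel. (\<Phi> z)^2)) *\<^sub>R (LINT z|lborel. (\<Phi> z)^2 *\<^sub>R Y z)"
    using eps by (simp add: beta_eps_translate Y_def)
  finally have "norm (beta_eps \<rho> \<epsilon> (\<lambda>x. T * Psi_eps \<eta> w \<epsilon> y x) - y)
      \<le> (LINT z|lborel. (w z)^2 * min \<delta> (\<epsilon> * norm z)) / (LINT z|lborel. (\<Phi> z)^2)"
    using mass_pos mass int_\<Phi> int_g deviation by (auto intro!: weighted_mean_dist_le simp: Y_def)
  also have "\<dots> \<le> (LINT z|lborel. (w z)^2 * min \<delta> (\<epsilon> * norm z))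
      / (LINT z|lborel. (w z)^2 * indicator (cball 0 (\<delta>/2)) z)"
    using mass_pos mass delta eps
    by (intro divide_left_mono Bochner_Integration.integral_nonneg mult_pos_pos) auto
  finally show ?thesis .
qed

theorem lemma4p2:
  fixes s \<mu> q V0 l0 a \<kappa> \<delta> \<rho> :: real
    and V :: "'a::euclidean_space \<Rightarrow> real"
    and \<Lambda> M :: "'a set"
    and f \<eta> :: "real \<Rightarrow> real"
    and w :: "'a \<Rightarrow> real"
    and t :: "real \<Rightarrow> 'a \<Rightarrow> real"
  assumes s: "0 < s" "s < 1"
    and N: "real DIM('a) > 2 * s"
    and mu: "0 < \<mu>" "\<mu> < 2 * s"
    and q: "2 < q" "q < (2 * real DIM('a) / (real DIM('a) - 2 * s)) / 2 * (2 - \<mu> / real DIM('a))"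
    and V_cont: "continuous_on UNIV V"
    and V_ge: "\<And>x. V0 \<le> V x" and V_inf: "V0 = (INF x. V x)" and V0_pos: "V0 > 0"
    and Lambda: "open \<Lambda>" "bounded \<Lambda>" "\<And>x. x \<in> frontier \<Lambda> \<Longrightarrow> V0 < V x"
    and M_def: "M = {x \<in> \<Lambda>. V x = V0}"
    and f_cont: "continuous_on UNIV f"
    and f_neg: "\<And>\<tau>. \<tau> < 0 \<Longrightarrow> f \<tau> = 0"
    and f_0: "((\<lambda>\<tau>. f \<tau> / \<tau>) \<longlongrightarrow> 0) (at 0)"
    and f_inf: "((\<lambda>\<tau>. f \<tau> / \<tau> powr (q - 1)) \<longlongrightarrow> 0) at_top"
    and AR: "\<And>\<tau>. \<tau> > 0 \<Longrightarrow> 0 < 4 * prim f \<tau> \<and> 4 * prim f \<tau> \<le> 2 * f \<tau> * \<tau>"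
    and f_mono: "strict_mono_on {0<..} (\<lambda>\<tau>. f \<tau> / \<tau>)"
    and kappa: "\<kappa> > 0"
      "\<And>l b \<epsilon>. l > 2 \<Longrightarrow> b > 0 \<Longrightarrow> f b / b = V0 / l \<Longrightarrow> \<epsilon> > 0 \<Longrightarrow>
          c_eps V s \<mu> (pen_G \<Lambda> f b l V0) \<epsilon> < ereal \<kappa>"
    and l0: "l0 > 2" and a: "a > 0" "f a / a = V0 / l0"
    and l0_K: "\<And>\<epsilon>. \<epsilon> > 0 \<Longrightarrow> \<exists>C < l0 / 2. \<forall>u \<in> ball_B V s \<epsilon> \<kappa>.
                  AE x in lborel. \<bar>K_eps \<mu> (pen_G \<Lambda> f a l0 V0) \<epsilon> u x\<bar> \<le> C"
    and w_gs: "ground_state (J_V0 V0 s \<mu> f) (Hs s) w" and w_pos: "\<And>x. w x > 0"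
    and delta: "\<delta> > 0" "{x. infdist x M \<le> \<delta>} \<subseteq> \<Lambda>"
    and eta_smooth: "\<And>k x. x > 0 \<Longrightarrow> ((deriv ^^ k) \<eta>) differentiable (at x)"
    and eta_range: "\<And>r. r \<ge> 0 \<Longrightarrow> 0 \<le> \<eta> r \<and> \<eta> r \<le> 1"
    and eta_1: "\<And>r. 0 \<le> r \<Longrightarrow> r \<le> \<delta> / 2 \<Longrightarrow> \<eta> r = 1"
    and eta_0: "\<And>r. r \<ge> \<delta> \<Longrightarrow> \<eta> r = 0"
    and rho: "\<rho> > 0" "{x. infdist x M \<le> \<delta>} \<subseteq> ball 0 \<rho>"
    and t_max: "\<And>\<epsilon> y. \<epsilon> > 0 \<Longrightarrow> y \<in> M \<Longrightarrow> t \<epsilon> y > 0 \<and>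
         (\<forall>\<tau>\<ge>0. \<tau> \<noteq> t \<epsilon> y \<longrightarrow>
            J_eps V s \<mu> (pen_G \<Lambda> f a l0 V0) \<epsilon> (\<lambda>x. \<tau> * Psi_eps \<eta> w \<epsilon> y x)
            < J_eps V s \<mu> (pen_G \<Lambda> f a l0 V0) \<epsilon> (\<lambda>x. t \<epsilon> y * Psi_eps \<eta> w \<epsilon> y x))"
  shows "uniform_limit M (\<lambda>\<epsilon> y. beta_eps \<rho> \<epsilon> (\<lambda>x. t \<epsilon> y * Psi_eps \<eta> w \<epsilon> y x)) (\<lambda>y. y) (at_right 0)"
proof -
  have "w \<in> Hs s"
    using w_gs by (simp add: ground_state_def critical_point_def)
  then have w_meas: "w \<in> borel_measurable borel" and w_sq: "integrable lborel (\<lambda>z. (w z)^2)"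
    by (simp add: Hs_def, rule Hs_integrable_square)
  have eta_cont: "continuous_on {0..} \<eta>"
    using eta_smooth[where k=0] delta(1) eta_1
    by (intro continuous_on_atLeast_0_if_differentiable_and_const_near_0[where d="\<delta>/2" and c=1]) auto
  have t_nonzero: "t \<epsilon> y \<noteq> 0" if "0 < \<epsilon>" "y \<in> M" for \<epsilon> y
    using t_max[OF that] by simp
  have mass_pos: "0 < (LINT z|lborel. (w z)^2 * indicator (cball 0 (\<delta>/2)) z)"
    using w_sq delta(1) w_pos[THEN less_imp_neq] by (intro lborel_integral_indicator_cball_pos) auto
  have "((\<lambda>\<epsilon>. (LINT z|lborel. (w z)^2 * min \<delta> (\<epsilon> * norm z))
      / (LINT z|lborel. (w z)^2 * indicator (cball 0 (\<delta>/2)) z)) \<longlongrightarrow> 0) (at_right 0)"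
    using lborel_integral_min_scaled_norm_tendsto_0[OF w_sq] delta(1)
    by (intro tendsto_divide_zero) auto
  then show ?thesis
  proof (rule uniform_limit_if_dist_bound)
    have "\<forall>\<^sub>F \<epsilon> in at_right (0::real). 0 < \<epsilon> \<and> \<epsilon> \<le> 1"
      by (auto simp: eventually_at_right_field intro!: exI[of _ 1])
    then show "\<forall>\<^sub>F \<epsilon> in at_right 0. \<forall>y\<in>M.
        dist (beta_eps \<rho> \<epsilon> (\<lambda>x. t \<epsilon> y * Psi_eps \<eta> w \<epsilon> y x)) y
        \<le> (LINT z|lborel. (w z)^2 * min \<delta> (\<epsilon> * norm z))
          / (LINT z|lborel. (w z)^2 * indicator (cball 0 (\<delta>/2)) z)"
      by eventually_elim
        (use w_meas w_sq mass_pos eta_cont eta_range eta_1 eta_0 delta(1) rho(2) t_nonzero in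
          \<open>auto simp: dist_norm intro!: dist_beta_eps_Psi_eps_le\<close>)
  qed
qed

end
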